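(* Let $v\in L^2(0,1)$ and let $f:[0,1]\times\mathbb{R}\to\mathbb{R}$ satisfy: (C(c)) $f$ is continuous on $[0,1]\times\mathbb{R}$ and has a continuous partial derivative $f_x$ with respect to the second variable on $[0,1]\times\mathbb{R}$; (C(f)) there exist positive constants $A,B$ with $A<\pi^2$ such that $|f(t,x)|\leqslant A|x|+B$ for all $t\in[0,1]$, $x\in\mathbb{R}$; (C($f_x$)) $\inf_{(t,x)\in[0,1]\times\mathbb{R}} f_x(t,x)>-\pi^2$. Then the Dirichlet problem $\ddot{x}(t)=f(t,x(t))+v(t)$ for a.e. $t\in[0,1]$, $x(0)=x(1)=0$, has a unique solution $x\in \mathbb{X}=H^2(0,1)\cap H^1_0(0,1)$.
   Context: $H^1_0(0,1)$ is the space of absolutely continuous $x:[0,1]\to\mathbb{R}$ with $x(0)=x(1)=0$ and weak derivative in $L^2(0,1)$; $H^2(0,1)$ is the space of functions in $H^1(0,1)$ whose derivative $\dot x$ also lies in $H^1(0,1)$. Solutions are understood in $\mathbb{X}=H^2(0,1)\cap H^1_0(0,1)$, the equation holding almost everywhere. *)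

theory Defs
  imports "HOL-Analysis.Analysis"
begin

definition L2_01 :: "(real \<Rightarrow> real) \<Rightarrow> bool" where
  "L2_01 g \<longleftrightarrow> g \<in> borel_measurable (lebesgue_on {0..1})
      \<and> integrable (lebesgue_on {0..1}) (\<lambda>t. (g t)\<^sup>2)"

text \<open>x is in H^1(0,1) with weak derivative y: x is absolutely continuous,
  namely the indefinite integral of y, and y is in L^2(0,1).\<close>
definition H1_with_deriv :: "(real \<Rightarrow> real) \<Rightarrow> (real \<Rightarrow> real) \<Rightarrow> bool" where
  "H1_with_deriv x y \<longleftrightarrow> L2_01 y \<and> integrable (lebesgue_on {0..1}) y
      \<and> (\<forall>t\<in>{0..1}. x t = x 0 + integral\<^sup>L (lebesgue_on {0..t}) y)"

text \<open>x in X = H^2(0,1) \<inter> H^1_0(0,1) solves x'' = f(t,x) + v a.e., x(0)=x(1)=0.\<close>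
definition dirichlet_solution ::
  "(real \<Rightarrow> real \<Rightarrow> real) \<Rightarrow> (real \<Rightarrow> real) \<Rightarrow> (real \<Rightarrow> real) \<Rightarrow> bool" where
  "dirichlet_solution f v x \<longleftrightarrow>
     (\<exists>x' x''. H1_with_deriv x x' \<and> H1_with_deriv x' x''
        \<and> x 0 = 0 \<and> x 1 = 0
        \<and> (AE t in lebesgue_on {0..1}. x'' t = f t (x t) + v t))"

end

theory Submission
  imports Defs
begin

text \<open>Both halves rest on Wirtinger's inequality \<open>k \<integral>w\<^sup>2 \<le> \<integral>w'\<^sup>2\<close> for \<open>w(0) = w(1) = 0\<close>
  and \<open>k < \<pi>\<^sup>2\<close>, combined with integration by parts \<open>\<integral>w'\<^sup>2 = - \<integral>w'' w\<close>.

  Uniqueness: the difference \<open>w\<close> of two solutions satisfies \<open>w'' = g\<close> with \<open>g w \<ge> c w\<^sup>2\<close>, so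
  \<open>\<integral>w'\<^sup>2 \<le> max (-c) 0 \<integral>w\<^sup>2\<close>, which contradicts Wirtinger's inequality unless \<open>w = 0\<close>.

  Existence: subtracting a solution of \<open>z'' = v\<close> leaves a continuous nonlinearity \<open>F\<close> of growth
  \<open>A < \<pi>\<^sup>2\<close>. Truncating \<open>F\<close> at a level \<open>R\<close> makes it globally Lipschitz without spoiling the
  growth bound or the one-sided bound on \<open>F\<^sub>x\<close>. For the truncated problem the damped Picard
  iteration \<open>x \<mapsto> (1 - \<tau>) x + \<tau> u\<close>, where \<open>u'' = F(t, x)\<close> and \<open>u(0) = u(1) = 0\<close>, contracts the
  Dirichlet energy of successive increments and converges uniformly to a solution. By the growth
  bound the energy of that solution, hence its sup norm, is at most \<open>R\<close>: the truncation is inactive.\<close>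

definition C1_dirichlet :: "(real \<Rightarrow> real) \<Rightarrow> (real \<Rightarrow> real) \<Rightarrow> bool" where
  "C1_dirichlet w w' \<longleftrightarrow> continuous_on {0..1} w' \<and>
     (\<forall>t\<in>{0..1}. (w has_real_derivative w' t) (at t within {0..1})) \<and> w 0 = 0 \<and> w 1 = 0"

lemma has_real_derivative_imp_continuous_on:
  assumes "\<And>t. t \<in> S \<Longrightarrow> (w has_real_derivative w' t) (at t within S)"
  shows "continuous_on S w"
  using assms by (meson DERIV_continuous continuous_on_eq_continuous_within)

lemma C1_dirichlet_continuous:
  assumes "C1_dirichlet w w'"
  shows "continuous_on {0..1} w" "continuous_on {0..1} w'"
  using assms has_real_derivative_imp_continuous_on unfolding C1_dirichlet_def by blast+

lemma C1_dirichlet_lincomb: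
  "C1_dirichlet a a' \<Longrightarrow> C1_dirichlet b b' \<Longrightarrow>
   C1_dirichlet (\<lambda>t. \<alpha> * a t + \<beta> * b t) (\<lambda>t. \<alpha> * a' t + \<beta> * b' t)"
  unfolding C1_dirichlet_def by (auto intro!: continuous_intros derivative_eq_intros)

lemma C1_dirichlet_add:
  "C1_dirichlet a a' \<Longrightarrow> C1_dirichlet b b' \<Longrightarrow> C1_dirichlet (\<lambda>t. a t + b t) (\<lambda>t. a' t + b' t)"
  unfolding C1_dirichlet_def by (auto intro!: continuous_intros derivative_eq_intros)

lemma C1_dirichlet_diff:
  "C1_dirichlet a a' \<Longrightarrow> C1_dirichlet b b' \<Longrightarrow> C1_dirichlet (\<lambda>t. a t - b t) (\<lambda>t. a' t - b' t)"
  unfolding C1_dirichlet_def by (auto intro!: continuous_intros derivative_eq_intros)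

lemma has_integral_real_derivative_initial:
  assumes "\<And>s. s \<in> {a..b} \<Longrightarrow> (g has_real_derivative g' s) (at s within {a..b})"
    and "a \<le> t" "t \<le> b"
  shows "(g' has_integral (g t - g a)) {a..t}"
proof -
  have "(g has_real_derivative g' s) (at s within {a..t})" if "s \<in> {a..t}" for s
    using assms that DERIV_subset[of g "g' s" s "{a..b}" "{a..t}"] by auto
  then show ?thesis
    using fundamental_theorem_of_calculus[OF \<open>a \<le> t\<close>, of g g']
    by (simp add: has_real_derivative_iff_has_vector_derivative)
qed

lemma integral_square_le:
  fixes g :: "real \<Rightarrow> real"
  assumes "continuous_on {0..1} g"
  shows "(integral {0..1} g)\<^sup>2 \<le> integral {0..1} (\<lambda>s. (g s)\<^sup>2)"
proof -
  define m where "m = integral {0..1} g"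
  have g: "(g has_integral m) {0..1}"
    unfolding m_def using assms by (intro integrable_integral integrable_continuous_real)
  have "((\<lambda>s. (g s)\<^sup>2) has_integral integral {0..1} (\<lambda>s. (g s)\<^sup>2)) {0..1}"
    using assms by (intro integrable_integral integrable_continuous_real continuous_intros)
  then have "((\<lambda>s. (g s)\<^sup>2 + (-2 * m * g s + m\<^sup>2)) has_integral
          integral {0..1} (\<lambda>s. (g s)\<^sup>2) + (-2 * m * m + m\<^sup>2)) {0..1}"
    using has_integral_const_real[of "m\<^sup>2" 0 1]
    by (intro has_integral_add has_integral_mult_right g) auto
  moreover have "(g s)\<^sup>2 + (-2 * m * g s + m\<^sup>2) = (g s - m)\<^sup>2" for s
    by (simp add: power2_eq_square algebra_simps)
  ultimately have "((\<lambda>s. (g s - m)\<^sup>2) has_integral integral {0..1} (\<lambda>s. (g s)\<^sup>2) - m\<^sup>2) {0..1}"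
    by (simp add: power2_eq_square)
  then have "0 \<le> integral {0..1} (\<lambda>s. (g s)\<^sup>2) - m\<^sup>2"
    by (rule has_integral_nonneg) simp
  then show ?thesis by (simp add: m_def)
qed

lemma C1_dirichlet_sq_le_energy:
  assumes w: "C1_dirichlet w w'" and t: "t \<in> {0..1}"
  shows "(w t)\<^sup>2 \<le> integral {0..1} (\<lambda>s. (w' s)\<^sup>2)"
proof -
  have c: "continuous_on {0..1} (\<lambda>s. \<bar>w' s\<bar>)"
    using C1_dirichlet_continuous(2)[OF w] by (intro continuous_intros)
  have "(w' has_integral w t) {0..t}"
    using has_integral_real_derivative_initial[of 0 1 w w' t] w t unfolding C1_dirichlet_def by simp
  then have "\<bar>w t\<bar> \<le> integral {0..t} (\<lambda>s. \<bar>w' s\<bar>)"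
    using integral_norm_bound_integral[of w' "{0..t}" "\<lambda>s. \<bar>w' s\<bar>"]
      integrable_continuous_real[OF continuous_on_subset[OF c, of "{0..t}"]] t
    by (auto simp: integral_unique has_integral_integrable)
  also have "\<dots> \<le> integral {0..1} (\<lambda>s. \<bar>w' s\<bar>)"
    using t c by (intro integral_subset_le integrable_continuous_real continuous_on_subset[OF c]) auto
  finally have "(w t)\<^sup>2 \<le> (integral {0..1} (\<lambda>s. \<bar>w' s\<bar>))\<^sup>2"
    by (metis abs_ge_zero power2_abs power_mono)
  also have "\<dots> \<le> integral {0..1} (\<lambda>s. (w' s)\<^sup>2)"
    using integral_square_le[OF c] by simp
  finally show ?thesis .
qed

lemma integration_by_parts_C1_dirichlet:
  assumes e: "C1_dirichlet e e'" and d': "continuous_on {0..1} d'" and h: "continuous_on {0..1} h"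
    and d'_deriv: "\<And>t. t \<in> {0..1} \<Longrightarrow> (d' has_real_derivative h t) (at t within {0..1})"
  shows "integral {0..1} (\<lambda>t. d' t * e' t) = - integral {0..1} (\<lambda>t. h t * e t)"
proof -
  have ce: "continuous_on {0..1} e" "continuous_on {0..1} e'"
    using C1_dirichlet_continuous[OF e] by auto
  have "((\<lambda>t. h t * e t + d' t * e' t) has_integral (d' 1 * e 1 - d' 0 * e 0)) {0..1}"
    using e d'_deriv unfolding C1_dirichlet_def
    by (intro has_integral_real_derivative_initial) (auto intro!: derivative_eq_intros)
  then have "integral {0..1} (\<lambda>t. h t * e t + d' t * e' t) = 0"
    using e by (simp add: C1_dirichlet_def integral_unique)
  moreover have "integral {0..1} (\<lambda>t. h t * e t + d' t * e' t) =
      integral {0..1} (\<lambda>t. h t * e t) + integral {0..1} (\<lambda>t. d' t * e' t)"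
    using ce d' h by (intro integral_add integrable_continuous_real continuous_intros)
  ultimately show ?thesis by simp
qed

section \<open>Wirtinger's inequality\<close>

lemma tan_square_completion:
  fixes a s w p :: real
  assumes "cos a \<noteq> 0"
  shows "(p + s * tan a * w)\<^sup>2 + (- s\<^sup>2 / (cos a)\<^sup>2 * w\<^sup>2 - s * tan a * (2 * w * p))
    = p\<^sup>2 - s\<^sup>2 * w\<^sup>2"
proof -
  have "(tan a)\<^sup>2 - 1 / (cos a)\<^sup>2 = -1"
    using assms sin_cos_squared_add2[of a] by (simp add: tan_def power_divide field_simps)
  moreover have "(p + s * tan a * w)\<^sup>2 + (- s\<^sup>2 / (cos a)\<^sup>2 * w\<^sup>2 - s * tan a * (2 * w * p))
      = p\<^sup>2 + s\<^sup>2 * w\<^sup>2 * ((tan a)\<^sup>2 - 1 / (cos a)\<^sup>2)"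
    by (simp add: power2_eq_square algebra_simps)
  ultimately show ?thesis by simp
qed

lemma cos_centered_nonzero:
  assumes s: "0 \<le> s" "s < pi" and t: "t \<in> {0..1}"
  shows "cos (s * (t - 1/2)) \<noteq> 0"
proof -
  have "\<bar>t - 1/2\<bar> \<le> 1/2"
    using t by (auto simp: abs_if)
  then have "s * \<bar>t - 1/2\<bar> \<le> s * (1/2)"
    using s(1) by (rule mult_left_mono)
  then have "\<bar>s * (t - 1/2)\<bar> \<le> s / 2"
    using s(1) by (simp add: abs_mult)
  then have "- (pi / 2) < s * (t - 1/2)" "s * (t - 1/2) < pi / 2"
    using s(2) by (auto simp: abs_le_iff)
  then show ?thesis
    using cos_gt_zero_pi[of "s * (t - 1/2)"] by simp
qed

lemma has_real_derivative_tan_weight: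
  assumes w: "(w has_real_derivative w' t) (at t within S)" and cos: "cos (a t) \<noteq> 0"
    and a: "a = (\<lambda>t. s * (t - 1/2))"
  shows "((\<lambda>t. - s * tan (a t) * (w t)\<^sup>2) has_real_derivative
    - s\<^sup>2 / (cos (a t))\<^sup>2 * (w t)\<^sup>2 - s * tan (a t) * (2 * w t * w' t)) (at t within S)"
proof -
  have "((\<lambda>t. tan (a t)) has_real_derivative s / (cos (a t))\<^sup>2) (at t within S)"
    unfolding a using cos[unfolded a] by (auto intro!: derivative_eq_intros simp: field_simps)
  then have "((\<lambda>t. - s * tan (a t)) has_real_derivative - s * (s / (cos (a t))\<^sup>2)) (at t within S)"
    by (rule DERIV_cmult)
  moreover have "((\<lambda>t. (w t)\<^sup>2) has_real_derivative 2 * w t * w' t) (at t within S)"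
    using DERIV_mult[OF w w] by (simp add: power2_eq_square algebra_simps)
  ultimately have "((\<lambda>t. - s * tan (a t) * (w t)\<^sup>2) has_real_derivative
      - s * (s / (cos (a t))\<^sup>2) * (w t)\<^sup>2 + 2 * w t * w' t * (- s * tan (a t))) (at t within S)"
    by (rule DERIV_mult)
  then show ?thesis
    by (rule DERIV_cong) (simp add: power2_eq_square algebra_simps)
qed

lemma wirtinger_inequality:
  assumes w: "C1_dirichlet w w'" and k: "0 < k" "k < pi\<^sup>2"
  shows "k * integral {0..1} (\<lambda>t. (w t)\<^sup>2) \<le> integral {0..1} (\<lambda>t. (w' t)\<^sup>2)"
proof -
  define s where "s = sqrt k"
  define a where "a t = s * (t - 1/2)" for t
  have s: "0 < s" "s\<^sup>2 = k" "s < pi"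
    using k real_sqrt_less_mono[OF k(2)] unfolding s_def by auto
  have cos_a: "cos (a t) \<noteq> 0" if "t \<in> {0..1}" for t
    unfolding a_def using s that by (intro cos_centered_nonzero) auto
  have cw: "continuous_on {0..1} w" "continuous_on {0..1} w'"
    using C1_dirichlet_continuous[OF w] by auto
  \<comment> \<open>\<open>\<psi> = -s tan (a t)\<close> solves \<open>\<psi>' = - (k + \<psi>\<^sup>2)\<close> on all of \<open>[0,1]\<close> because \<open>k < \<pi>\<^sup>2\<close>,
    so \<open>(w' - \<psi> w)\<^sup>2 + (\<psi> w\<^sup>2)' = w'\<^sup>2 - k w\<^sup>2\<close>\<close>
  define \<Phi> where "\<Phi> t = - s * tan (a t) * (w t)\<^sup>2" for t
  define \<Phi>' where "\<Phi>' t = - s\<^sup>2 / (cos (a t))\<^sup>2 * (w t)\<^sup>2 - s * tan (a t) * (2 * w t * w' t)" for t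
  have "(\<Phi> has_real_derivative \<Phi>' t) (at t within {0..1})" if "t \<in> {0..1}" for t
    unfolding \<Phi>_def[abs_def] \<Phi>'_def using w that cos_a[OF that] unfolding C1_dirichlet_def
    by (intro has_real_derivative_tan_weight) (auto simp: a_def[abs_def])
  then have \<Phi>': "(\<Phi>' has_integral 0) {0..1}"
    using has_integral_real_derivative_initial[of 0 1 \<Phi> \<Phi>' 1] w by (simp add: \<Phi>_def C1_dirichlet_def)
  define q where "q t = (w' t + s * tan (a t) * w t)\<^sup>2" for t
  have "continuous_on {0..1} (\<lambda>t. tan (a t))"
    using cos_a unfolding a_def by (intro continuous_on_tan continuous_intros) auto
  then have "continuous_on {0..1} q"
    unfolding q_def using cw
    by (intro continuous_on_power continuous_on_add continuous_on_mult continuous_on_const)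
  then have q: "(q has_integral integral {0..1} q) {0..1}"
    by (intro integrable_integral integrable_continuous_real)
  have "((\<lambda>t. q t + \<Phi>' t) has_integral integral {0..1} q) {0..1}"
    using has_integral_add[OF q \<Phi>'] by simp
  moreover have "((\<lambda>t. q t + \<Phi>' t) has_integral integral {0..1} q) {0..1} \<longleftrightarrow>
      ((\<lambda>t. (w' t)\<^sup>2 - k * (w t)\<^sup>2) has_integral integral {0..1} q) {0..1}"
  proof (rule has_integral_cong)
    fix t :: real assume "t \<in> {0..1}"
    show "q t + \<Phi>' t = (w' t)\<^sup>2 - k * (w t)\<^sup>2"
      unfolding q_def \<Phi>'_def tan_square_completion[OF cos_a[OF \<open>t \<in> {0..1}\<close>]]
      by (simp only: s(2))
  qed
  ultimately have "((\<lambda>t. (w' t)\<^sup>2 - k * (w t)\<^sup>2) has_integral integral {0..1} q) {0..1}"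
    by blast
  moreover have "((\<lambda>t. (w' t)\<^sup>2 - k * (w t)\<^sup>2) has_integral
      integral {0..1} (\<lambda>t. (w' t)\<^sup>2) - k * integral {0..1} (\<lambda>t. (w t)\<^sup>2)) {0..1}"
  proof (intro has_integral_diff has_integral_mult_right)
    show "((\<lambda>t. (w' t)\<^sup>2) has_integral integral {0..1} (\<lambda>t. (w' t)\<^sup>2)) {0..1}"
      using cw by (intro integrable_integral integrable_continuous_real continuous_on_power)
    show "((\<lambda>t. (w t)\<^sup>2) has_integral integral {0..1} (\<lambda>t. (w t)\<^sup>2)) {0..1}"
      using cw by (intro integrable_integral integrable_continuous_real continuous_on_power)
  qed
  ultimately have "integral {0..1} q = integral {0..1} (\<lambda>t. (w' t)\<^sup>2) - k * integral {0..1} (\<lambda>t. (w t)\<^sup>2)"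
    by (rule has_integral_unique)
  moreover have "0 \<le> integral {0..1} q"
    using q by (rule has_integral_nonneg) (simp add: q_def)
  ultimately show ?thesis
    by linarith
qed

section \<open>The Dirichlet problem for \<open>u'' = h\<close>\<close>

definition primitive :: "(real \<Rightarrow> real) \<Rightarrow> real \<Rightarrow> real" where
  "primitive h t = integral {0..t} h"

definition green :: "(real \<Rightarrow> real) \<Rightarrow> real \<Rightarrow> real" where
  "green h t = primitive (primitive h) t - t * primitive (primitive h) 1"

definition green_deriv :: "(real \<Rightarrow> real) \<Rightarrow> real \<Rightarrow> real" where
  "green_deriv h t = primitive h t - primitive (primitive h) 1"

lemma continuous_on_primitive:
  "continuous_on {0..1} h \<Longrightarrow> continuous_on {0..1} (primitive h)"
  unfolding primitive_def by (intro indefinite_integral_continuous_1 integrable_continuous_real)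

lemma primitive_has_real_derivative:
  "continuous_on {0..1} h \<Longrightarrow> t \<in> {0..1} \<Longrightarrow>
   (primitive h has_real_derivative h t) (at t within {0..1})"
  unfolding primitive_def by (rule integral_has_real_derivative)

lemma green_deriv_has_real_derivative:
  "continuous_on {0..1} h \<Longrightarrow> t \<in> {0..1} \<Longrightarrow>
   (green_deriv h has_real_derivative h t) (at t within {0..1})"
  unfolding green_deriv_def[abs_def]
  by (auto intro!: derivative_eq_intros primitive_has_real_derivative)

lemma C1_dirichlet_green:
  assumes h: "continuous_on {0..1} h"
  shows "C1_dirichlet (green h) (green_deriv h)"
  unfolding C1_dirichlet_def
proof (intro conjI ballI)
  show "continuous_on {0..1} (green_deriv h)"
    unfolding green_deriv_def[abs_def] using continuous_on_primitive[OF h]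
    by (intro continuous_intros)
  show "(green h has_real_derivative green_deriv h t) (at t within {0..1})" if "t \<in> {0..1}" for t
    unfolding green_def[abs_def] green_deriv_def
    using that continuous_on_primitive[OF h]
    by (auto intro!: derivative_eq_intros primitive_has_real_derivative)
qed (simp_all add: green_def primitive_def)

lemma primitive_diff_le:
  assumes a: "continuous_on {0..1} a" and b: "continuous_on {0..1} b"
    and B: "\<And>s. s \<in> {0..1} \<Longrightarrow> \<bar>a s - b s\<bar> \<le> B" and t: "t \<in> {0..1}"
  shows "\<bar>primitive a t - primitive b t\<bar> \<le> B"
proof -
  have "primitive a t - primitive b t = integral {0..t} (\<lambda>s. a s - b s)"
    unfolding primitive_def using t
    by (intro integral_diff[symmetric] integrable_continuous_real continuous_on_subset[OF a]
        continuous_on_subset[OF b]) auto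
  also have "\<bar>\<dots>\<bar> \<le> B * (t - 0)"
    using integral_bound[of 0 t "\<lambda>s. a s - b s" B] t B
      continuous_on_subset[OF continuous_on_diff[OF a b], of "{0..t}"] by auto
  also have "\<dots> \<le> B"
    using t B[of 0] by (simp add: mult_left_le)
  finally show ?thesis .
qed

lemma green_diff_le:
  assumes a: "continuous_on {0..1} a" and b: "continuous_on {0..1} b"
    and B: "\<And>s. s \<in> {0..1} \<Longrightarrow> \<bar>a s - b s\<bar> \<le> B" and t: "t \<in> {0..1}"
  shows "\<bar>green a t - green b t\<bar> \<le> 2 * B"
proof -
  have pp: "\<bar>primitive (primitive a) s - primitive (primitive b) s\<bar> \<le> B" if "s \<in> {0..1}" for s
    using a b B that
    by (intro primitive_diff_le continuous_on_primitive) (auto intro: primitive_diff_le)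
  have "\<bar>t * (primitive (primitive a) 1 - primitive (primitive b) 1)\<bar> \<le> B"
    using t pp[of 1] by (auto simp: abs_mult intro: order_trans[OF mult_left_le_one_le])
  moreover have "green a t - green b t = (primitive (primitive a) t - primitive (primitive b) t)
      - t * (primitive (primitive a) 1 - primitive (primitive b) 1)"
    unfolding green_def by (simp add: algebra_simps)
  ultimately show ?thesis
    using pp[OF t] by linarith
qed

section \<open>Damped Picard iteration\<close>

lemma cross_term_le:
  assumes e: "C1_dirichlet e e'" and d: "C1_dirichlet d d'" and h: "continuous_on {0..1} h"
    and d'_deriv: "\<And>t. t \<in> {0..1} \<Longrightarrow> (d' has_real_derivative h t) (at t within {0..1})"
    and mono: "\<And>t. t \<in> {0..1} \<Longrightarrow> c * (e t)\<^sup>2 \<le> h t * e t"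
    and c: "c \<le> 0" and k: "0 < k" "k < pi\<^sup>2"
  shows "integral {0..1} (\<lambda>t. d' t * e' t) \<le> (- c / k) * integral {0..1} (\<lambda>t. (e' t)\<^sup>2)"
proof -
  have ce: "continuous_on {0..1} e" using C1_dirichlet_continuous[OF e] by auto
  have "integral {0..1} (\<lambda>t. d' t * e' t) = - integral {0..1} (\<lambda>t. h t * e t)"
    using C1_dirichlet_continuous(2)[OF d]
    by (rule integration_by_parts_C1_dirichlet[OF e _ h d'_deriv])
  also have "\<dots> \<le> - integral {0..1} (\<lambda>t. c * (e t)\<^sup>2)"
    unfolding neg_le_iff_le using mono ce h
    by (intro integral_le integrable_continuous_real continuous_intros) auto
  also have "\<dots> = (- c / k) * (k * integral {0..1} (\<lambda>t. (e t)\<^sup>2))"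
    using k by simp
  also have "\<dots> \<le> (- c / k) * integral {0..1} (\<lambda>t. (e' t)\<^sup>2)"
    using wirtinger_inequality[OF e k] c k by (intro mult_left_mono) (auto simp: divide_nonpos_pos)
  finally show ?thesis .
qed

lemma energy_le_lipschitz:
  assumes e: "C1_dirichlet e e'" and d: "C1_dirichlet d d'" and h: "continuous_on {0..1} h"
    and d'_deriv: "\<And>t. t \<in> {0..1} \<Longrightarrow> (d' has_real_derivative h t) (at t within {0..1})"
    and lip: "\<And>t. t \<in> {0..1} \<Longrightarrow> \<bar>h t\<bar> \<le> L * \<bar>e t\<bar>"
    and k: "0 < k" "k < pi\<^sup>2"
  shows "integral {0..1} (\<lambda>t. (d' t)\<^sup>2) \<le> (L / k)\<^sup>2 * integral {0..1} (\<lambda>t. (e' t)\<^sup>2)"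
proof -
  define M where "M = L / k"
  have ce: "continuous_on {0..1} e" and cd: "continuous_on {0..1} d" "continuous_on {0..1} d'"
    using C1_dirichlet_continuous[OF e] C1_dirichlet_continuous[OF d] by auto
  have pointwise: "- (h t * d t) \<le> k / 2 * (M\<^sup>2 * (e t)\<^sup>2 + (d t)\<^sup>2)" if "t \<in> {0..1}" for t
  proof -
    have "- (h t * d t) \<le> \<bar>h t\<bar> * \<bar>d t\<bar>"
      by (simp add: abs_mult[symmetric])
    also have "\<dots> \<le> L * \<bar>e t\<bar> * \<bar>d t\<bar>"
      using lip[OF that] by (simp add: mult_right_mono)
    also have "\<dots> = k / 2 * (2 * (M * \<bar>e t\<bar>) * \<bar>d t\<bar>)"
      using k by (simp add: M_def)
    also have "\<dots> \<le> k / 2 * ((M * \<bar>e t\<bar>)\<^sup>2 + \<bar>d t\<bar>\<^sup>2)"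
      using k by (intro mult_left_mono sum_squares_bound) auto
    finally show ?thesis by (simp add: power_mult_distrib)
  qed
  have "integral {0..1} (\<lambda>t. (d' t)\<^sup>2) = - integral {0..1} (\<lambda>t. h t * d t)"
    unfolding power2_eq_square by (rule integration_by_parts_C1_dirichlet[OF d cd(2) h d'_deriv])
  also have "\<dots> \<le> integral {0..1} (\<lambda>t. k / 2 * (M\<^sup>2 * (e t)\<^sup>2 + (d t)\<^sup>2))"
    unfolding integral_neg[symmetric] using pointwise ce cd h
    by (intro integral_le integrable_continuous_real continuous_intros) auto
  also have "\<dots> = (M\<^sup>2 * (k * integral {0..1} (\<lambda>t. (e t)\<^sup>2)) + k * integral {0..1} (\<lambda>t. (d t)\<^sup>2)) / 2"
    using ce cd by (simp add: integral_add integrable_continuous_real continuous_intros algebra_simps)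
  also have "\<dots> \<le> (M\<^sup>2 * integral {0..1} (\<lambda>t. (e' t)\<^sup>2) + integral {0..1} (\<lambda>t. (d' t)\<^sup>2)) / 2"
    using wirtinger_inequality[OF e k] wirtinger_inequality[OF d k]
    by (intro divide_right_mono add_mono mult_left_mono) auto
  finally show ?thesis by (simp add: M_def)
qed

lemma relaxation_coefficient_le:
  fixes \<theta> M \<tau> :: real
  assumes \<theta>: "0 \<le> \<theta>" and \<tau>: "\<tau> = (1 - \<theta>) / (1 + M\<^sup>2)"
  shows "(1 - \<tau>)\<^sup>2 + 2 * \<tau> * (1 - \<tau>) * \<theta> + \<tau>\<^sup>2 * M\<^sup>2 \<le> 1 - \<tau> * (1 - \<theta>)"
proof -
  have "0 < 1 + M\<^sup>2"
    by (simp add: add_pos_nonneg)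
  then have \<tau>M: "\<tau> * (1 + M\<^sup>2) = 1 - \<theta>"
    unfolding \<tau> by simp
  have "(1 - \<tau>)\<^sup>2 + 2 * \<tau> * (1 - \<tau>) * \<theta> + \<tau>\<^sup>2 * M\<^sup>2
      = 1 - 2 * \<tau> * (1 - \<theta>) + \<tau> * (\<tau> * (1 + M\<^sup>2)) - 2 * \<tau>\<^sup>2 * \<theta>"
    by (simp add: power2_eq_square algebra_simps)
  also have "\<dots> = 1 - \<tau> * (1 - \<theta>) - 2 * \<tau>\<^sup>2 * \<theta>"
    unfolding \<tau>M by (simp add: algebra_simps)
  finally show ?thesis
    using \<theta> by simp
qed

lemma relaxed_energy_le:
  assumes e: "C1_dirichlet e e'" and d: "C1_dirichlet d d'" and h: "continuous_on {0..1} h"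
    and d'_deriv: "\<And>t. t \<in> {0..1} \<Longrightarrow> (d' has_real_derivative h t) (at t within {0..1})"
    and mono: "\<And>t. t \<in> {0..1} \<Longrightarrow> c * (e t)\<^sup>2 \<le> h t * e t"
    and lip: "\<And>t. t \<in> {0..1} \<Longrightarrow> \<bar>h t\<bar> \<le> L * \<bar>e t\<bar>"
    and c: "- k < c" "c \<le> 0" and k: "0 < k" "k < pi\<^sup>2"
    and \<tau>: "\<tau> = (1 + c / k) / (1 + (L / k)\<^sup>2)"
  shows "integral {0..1} (\<lambda>t. ((1 - \<tau>) * e' t + \<tau> * d' t)\<^sup>2)
    \<le> (1 - \<tau> * (1 + c / k)) * integral {0..1} (\<lambda>t. (e' t)\<^sup>2)"
proof -
  define \<theta> where "\<theta> = - c / k"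
  define Ee where "Ee = integral {0..1} (\<lambda>t. (e' t)\<^sup>2)"
  define Ed where "Ed = integral {0..1} (\<lambda>t. (d' t)\<^sup>2)"
  define X where "X = integral {0..1} (\<lambda>t. d' t * e' t)"
  have \<theta>: "0 \<le> \<theta>" "\<theta> < 1"
    using c k by (auto simp: \<theta>_def divide_nonpos_pos field_simps)
  have \<tau>': "\<tau> = (1 - \<theta>) / (1 + (L / k)\<^sup>2)"
    unfolding \<tau> \<theta>_def by simp
  have "0 < 1 + (L / k)\<^sup>2" "1 - \<theta> \<le> 1 + (L / k)\<^sup>2"
    using \<theta> zero_le_power2[of "L / k"] by linarith+
  then have \<tau>01: "0 \<le> \<tau>" "\<tau> \<le> 1"
    using \<theta> unfolding \<tau>' by (auto simp: divide_le_eq)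
  have Ee: "0 \<le> Ee"
    unfolding Ee_def using C1_dirichlet_continuous(2)[OF e]
    by (intro integral_nonneg integrable_continuous_real continuous_intros) auto
  have ce: "continuous_on {0..1} e'" and cd: "continuous_on {0..1} d'"
    using C1_dirichlet_continuous e d by blast+
  have "((\<lambda>t. (1 - \<tau>)\<^sup>2 * (e' t)\<^sup>2 + 2 * \<tau> * (1 - \<tau>) * (d' t * e' t) + \<tau>\<^sup>2 * (d' t)\<^sup>2) has_integral
      (1 - \<tau>)\<^sup>2 * Ee + 2 * \<tau> * (1 - \<tau>) * X + \<tau>\<^sup>2 * Ed) {0..1}"
    unfolding Ee_def Ed_def X_def using ce cd
    by (intro has_integral_mult_right has_integral_add integrable_integral
        integrable_continuous_real continuous_intros)
  then have "integral {0..1} (\<lambda>t. ((1 - \<tau>) * e' t + \<tau> * d' t)\<^sup>2)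
      = (1 - \<tau>)\<^sup>2 * Ee + 2 * \<tau> * (1 - \<tau>) * X + \<tau>\<^sup>2 * Ed"
    by (simp add: integral_unique power2_eq_square algebra_simps)
  also have "\<dots> \<le> (1 - \<tau>)\<^sup>2 * Ee + 2 * \<tau> * (1 - \<tau>) * (\<theta> * Ee) + \<tau>\<^sup>2 * ((L / k)\<^sup>2 * Ee)"
    using cross_term_le[OF e d h d'_deriv mono c(2) k] energy_le_lipschitz[OF e d h d'_deriv lip k] \<tau>01
    unfolding Ee_def Ed_def X_def \<theta>_def by (intro add_mono mult_left_mono) auto
  also have "\<dots> = ((1 - \<tau>)\<^sup>2 + 2 * \<tau> * (1 - \<tau>) * \<theta> + \<tau>\<^sup>2 * (L / k)\<^sup>2) * Ee"
    by (simp add: algebra_simps)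
  also have "\<dots> \<le> (1 - \<tau> * (1 - \<theta>)) * Ee"
    using relaxation_coefficient_le[OF \<theta>(1) \<tau>'] Ee by (rule mult_right_mono)
  finally show ?thesis
    unfolding Ee_def \<theta>_def by simp
qed

lemma continuous_on_superposition:
  assumes G: "continuous_on (S \<times> UNIV) (\<lambda>(t, x). G t x)" and x: "continuous_on S x"
  shows "continuous_on S (\<lambda>s. G s (x s) :: real)"
proof -
  have "continuous_on S (\<lambda>s. (\<lambda>(t, x). G t x) (s, x s))"
    by (rule continuous_on_compose2[OF G]) (auto intro!: continuous_intros x)
  then show ?thesis by simp
qed

lemma uniform_limit_geometric_increments:
  fixes x :: "nat \<Rightarrow> 'a \<Rightarrow> real"
  assumes incr: "\<And>n t. t \<in> S \<Longrightarrow> \<bar>x (Suc n) t - x n t\<bar> \<le> D * r ^ n" and r: "0 \<le> r" "r < 1"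
  shows "\<exists>u. uniform_limit S x u sequentially"
proof -
  have summable: "summable (\<lambda>n. D * r ^ n)"
    using r by (intro summable_mult summable_geometric) simp
  have "uniform_limit S (\<lambda>n t. \<Sum>i<n. x (Suc i) t - x i t)
      (\<lambda>t. \<Sum>i. x (Suc i) t - x i t) sequentially"
    by (rule Weierstrass_m_test[OF _ summable]) (use incr in simp)
  then have "uniform_limit S (\<lambda>n t. x 0 t + (\<Sum>i<n. x (Suc i) t - x i t))
      (\<lambda>t. x 0 t + (\<Sum>i. x (Suc i) t - x i t)) sequentially"
    by (intro uniform_limit_add uniform_limit_const)
  moreover have "x 0 t + (\<Sum>i<n. x (Suc i) t - x i t) = x n t" for n t
    using sum_lessThan_telescope[of "\<lambda>i. x i t" n] by simp
  ultimately show ?thesis by auto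
qed

lemma uniform_limit_of_energy_decay:
  assumes C1: "\<And>n. C1_dirichlet (x n) (x' n)"
    and decay: "\<And>n. integral {0..1} (\<lambda>t. (x' (Suc (Suc n)) t - x' (Suc n) t)\<^sup>2)
      \<le> q * integral {0..1} (\<lambda>t. (x' (Suc n) t - x' n t)\<^sup>2)"
    and q: "0 \<le> q" "q < 1"
  shows "\<exists>u. uniform_limit {0..1} x u sequentially"
proof -
  define E where "E n = integral {0..1} (\<lambda>t. (x' (Suc n) t - x' n t)\<^sup>2)" for n
  have E_Suc: "E (Suc n) \<le> q * E n" for n
    unfolding E_def by (rule decay)
  have E: "E n \<le> q ^ n * E 0" for n
  proof (induction n)
    case (Suc n)
    then show ?case
      using E_Suc[of n] mult_left_mono[OF Suc q(1)] by (simp add: mult.assoc)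
  qed simp
  have "\<bar>x (Suc n) t - x n t\<bar> \<le> sqrt (E 0) * sqrt q ^ n" if "t \<in> {0..1}" for n t
  proof -
    have sq: "(x (Suc n) t - x n t)\<^sup>2 \<le> q ^ n * E 0"
      using C1_dirichlet_sq_le_energy[OF C1_dirichlet_diff[OF C1[of "Suc n"] C1[of n]] that] E[of n]
      unfolding E_def by linarith
    have "\<bar>x (Suc n) t - x n t\<bar> \<le> sqrt (q ^ n * E 0)"
      using real_sqrt_le_mono[OF sq] by (simp only: real_sqrt_abs)
    also have "sqrt (q ^ n * E 0) = sqrt (E 0) * sqrt q ^ n"
      by (simp add: real_sqrt_mult real_sqrt_power)
    finally show ?thesis .
  qed
  then show ?thesis
    using q by (intro uniform_limit_geometric_increments[of "{0..1}" x "sqrt (E 0)" "sqrt q"]) auto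
qed

lemma green_superposition_tendsto:
  assumes G: "continuous_on ({0..1} \<times> UNIV) (\<lambda>(t, x). G t x)"
    and lip: "\<And>t a b. t \<in> {0..1} \<Longrightarrow> \<bar>G t a - G t b\<bar> \<le> L * \<bar>a - b\<bar>" and L: "0 < L"
    and x: "\<And>n. continuous_on {0..1} (x n)" and u: "continuous_on {0..1} u"
    and lim: "uniform_limit {0..1} x u sequentially" and t: "t \<in> {0..1}"
  shows "(\<lambda>n. green (\<lambda>s. G s (x n s)) t) \<longlonglongrightarrow> green (\<lambda>s. G s (u s)) t"
proof (rule tendstoI)
  fix \<epsilon> :: real assume "0 < \<epsilon>"
  then have "\<forall>\<^sub>F n in sequentially. \<forall>s\<in>{0..1}. dist (x n s) (u s) < \<epsilon> / (4 * L)"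
    using L by (intro uniform_limitD[OF lim]) simp
  then show "\<forall>\<^sub>F n in sequentially. dist (green (\<lambda>s. G s (x n s)) t) (green (\<lambda>s. G s (u s)) t) < \<epsilon>"
  proof eventually_elim
    case (elim n)
    have "\<bar>G s (x n s) - G s (u s)\<bar> \<le> \<epsilon> / 4" if "s \<in> {0..1}" for s
    proof -
      have "\<bar>G s (x n s) - G s (u s)\<bar> \<le> L * \<bar>x n s - u s\<bar>"
        using lip[OF that] .
      also have "\<dots> \<le> L * (\<epsilon> / (4 * L))"
        using elim that L by (intro mult_left_mono) (auto simp: dist_real_def less_imp_le)
      finally show ?thesis
        using L by simp
    qed
    from green_diff_le[OF continuous_on_superposition[OF G x] continuous_on_superposition[OF G u]
        this t]
    show ?case
      using L \<open>0 < \<epsilon>\<close> by (simp add: dist_real_def)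
  qed
qed

lemma relaxed_step_contracts:
  assumes G: "continuous_on ({0..1} \<times> UNIV) (\<lambda>(t, x). G t x)"
    and lip: "\<And>t a b. t \<in> {0..1} \<Longrightarrow> \<bar>G t a - G t b\<bar> \<le> L * \<bar>a - b\<bar>"
    and mono: "\<And>t a b. t \<in> {0..1} \<Longrightarrow> c * (a - b)\<^sup>2 \<le> (G t a - G t b) * (a - b)"
    and c: "- k < c" "c \<le> 0" and k: "0 < k" "k < pi\<^sup>2"
    and \<tau>: "\<tau> = (1 + c / k) / (1 + (L / k)\<^sup>2)"
    and x: "C1_dirichlet x x'" and y: "C1_dirichlet y y'"
  shows "integral {0..1} (\<lambda>t. ((1 - \<tau>) * (x' t - y' t) +
      \<tau> * (green_deriv (\<lambda>s. G s (x s)) t - green_deriv (\<lambda>s. G s (y s)) t))\<^sup>2)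
    \<le> (1 - \<tau> * (1 + c / k)) * integral {0..1} (\<lambda>t. (x' t - y' t)\<^sup>2)"
proof -
  have cGx: "continuous_on {0..1} (\<lambda>s. G s (x s))" and cGy: "continuous_on {0..1} (\<lambda>s. G s (y s))"
    using continuous_on_superposition[OF G] C1_dirichlet_continuous(1) x y by blast+
  let ?h = "\<lambda>t. G t (x t) - G t (y t)"
  show ?thesis
  proof (rule relaxed_energy_le[OF C1_dirichlet_diff[OF x y]
        C1_dirichlet_diff[OF C1_dirichlet_green[OF cGx] C1_dirichlet_green[OF cGy]] _ _ _ _ c k \<tau>])
    show "continuous_on {0..1} ?h"
      using cGx cGy by (intro continuous_intros)
    show "((\<lambda>t. green_deriv (\<lambda>s. G s (x s)) t - green_deriv (\<lambda>s. G s (y s)) t)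
        has_real_derivative ?h t) (at t within {0..1})" if "t \<in> {0..1}" for t
      using that cGx cGy by (intro derivative_intros green_deriv_has_real_derivative)
    show "c * (x t - y t)\<^sup>2 \<le> ?h t * (x t - y t)" if "t \<in> {0..1}" for t
      using mono[OF that] .
    show "\<bar>?h t\<bar> \<le> L * \<bar>x t - y t\<bar>" if "t \<in> {0..1}" for t
      using lip[OF that] .
  qed
qed

primrec relaxed_picard ::
  "(real \<Rightarrow> real \<Rightarrow> real) \<Rightarrow> real \<Rightarrow> nat \<Rightarrow> (real \<Rightarrow> real) \<times> (real \<Rightarrow> real)" where
  "relaxed_picard G \<tau> 0 = (\<lambda>t. 0, \<lambda>t. 0)"
| "relaxed_picard G \<tau> (Suc n) =
    (case relaxed_picard G \<tau> n of (x, x') \<Rightarrow>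
      (\<lambda>t. (1 - \<tau>) * x t + \<tau> * green (\<lambda>s. G s (x s)) t,
       \<lambda>t. (1 - \<tau>) * x' t + \<tau> * green_deriv (\<lambda>s. G s (x s)) t))"

lemma C1_dirichlet_relaxed_picard:
  assumes G: "continuous_on ({0..1} \<times> UNIV) (\<lambda>(t, x). G t x)"
  shows "C1_dirichlet (fst (relaxed_picard G \<tau> n)) (snd (relaxed_picard G \<tau> n))"
proof (induction n)
  case 0
  show ?case by (simp add: C1_dirichlet_def)
next
  case (Suc n)
  then have "continuous_on {0..1} (\<lambda>s. G s (fst (relaxed_picard G \<tau> n) s))"
    by (intro continuous_on_superposition[OF G] C1_dirichlet_continuous(1))
  from C1_dirichlet_lincomb[OF Suc C1_dirichlet_green[OF this]] show ?case
    by (simp add: case_prod_unfold)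
qed

lemma green_fixed_point_exists:
  assumes G: "continuous_on ({0..1} \<times> UNIV) (\<lambda>(t, x). G t x)"
    and lip: "\<And>t a b. t \<in> {0..1} \<Longrightarrow> \<bar>G t a - G t b\<bar> \<le> L * \<bar>a - b\<bar>" and L: "0 < L"
    and mono: "\<And>t a b. t \<in> {0..1} \<Longrightarrow> c * (a - b)\<^sup>2 \<le> (G t a - G t b) * (a - b)"
    and c: "- k < c" "c \<le> 0" and k: "0 < k" "k < pi\<^sup>2"
  shows "\<exists>u. continuous_on {0..1} u \<and> (\<forall>t\<in>{0..1}. u t = green (\<lambda>s. G s (u s)) t)"
proof -
  define \<tau> where "\<tau> = (1 + c / k) / (1 + (L / k)\<^sup>2)"
  define q where "q = 1 - \<tau> * (1 + c / k)"
  define x where "x n = fst (relaxed_picard G \<tau> n)" for n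
  define x' where "x' n = snd (relaxed_picard G \<tau> n)" for n
  have x_Suc: "x (Suc n) = (\<lambda>t. (1 - \<tau>) * x n t + \<tau> * green (\<lambda>s. G s (x n s)) t)" for n
    by (simp add: x_def case_prod_unfold)
  have x'_Suc: "x' (Suc n) = (\<lambda>t. (1 - \<tau>) * x' n t + \<tau> * green_deriv (\<lambda>s. G s (x n s)) t)" for n
    by (simp add: x_def x'_def case_prod_unfold)
  have C1: "C1_dirichlet (x n) (x' n)" for n
    unfolding x_def x'_def by (rule C1_dirichlet_relaxed_picard[OF G])
  have cx: "continuous_on {0..1} (x n)" for n
    using C1_dirichlet_continuous(1)[OF C1] .
  have c': "0 < 1 + c / k" "1 + c / k \<le> 1"
    using c k by (auto simp: field_simps)
  have M: "0 < 1 + (L / k)\<^sup>2" "1 + c / k \<le> 1 + (L / k)\<^sup>2"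
    using c' zero_le_power2[of "L / k"] by linarith+
  have \<tau>: "0 < \<tau>" "\<tau> \<le> 1"
    unfolding \<tau>_def using divide_pos_pos[OF c'(1) M(1)] divide_le_eq_1_pos[OF M(1)] M(2) by auto
  have q: "0 \<le> q" "q < 1"
    unfolding q_def using \<tau> c' by (auto simp: mult_le_one)
  have decay: "integral {0..1} (\<lambda>t. (x' (Suc (Suc n)) t - x' (Suc n) t)\<^sup>2)
      \<le> q * integral {0..1} (\<lambda>t. (x' (Suc n) t - x' n t)\<^sup>2)" for n
    using relaxed_step_contracts[OF G lip mono c k \<tau>_def C1[of "Suc n"] C1[of n]]
    unfolding q_def x'_Suc[of "Suc n"] x'_Suc[of n] by (simp add: algebra_simps)
  obtain u where lim: "uniform_limit {0..1} x u sequentially"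
    using uniform_limit_of_energy_decay[of x x' q, OF C1 decay q] by blast
  have cu: "continuous_on {0..1} u"
    by (rule uniform_limit_theorem[OF _ lim]) (auto intro: always_eventually cx)
  have "u t = green (\<lambda>s. G s (u s)) t" if t: "t \<in> {0..1}" for t
  proof -
    have "(\<lambda>n. x n t) \<longlonglongrightarrow> u t"
      by (rule tendsto_uniform_limitI[OF lim t])
    then have "(\<lambda>n. x (Suc n) t) \<longlonglongrightarrow> (1 - \<tau>) * u t + \<tau> * green (\<lambda>s. G s (u s)) t"
      unfolding x_Suc
      by (intro tendsto_intros green_superposition_tendsto[OF G lip L cx cu lim t])
    moreover have "(\<lambda>n. x (Suc n) t) \<longlonglongrightarrow> u t"
      using \<open>(\<lambda>n. x n t) \<longlonglongrightarrow> u t\<close> by (rule LIMSEQ_Suc)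
    ultimately have "u t = (1 - \<tau>) * u t + \<tau> * green (\<lambda>s. G s (u s)) t"
      using LIMSEQ_unique by blast
    then show ?thesis
      using \<tau>(1) by (simp add: algebra_simps)
  qed
  then show ?thesis
    using cu by blast
qed

section \<open>Truncation and the a-priori bound\<close>

definition clip :: "real \<Rightarrow> real \<Rightarrow> real" where
  "clip R w = max (- R) (min R w)"

lemma clip_bounds:
  assumes "0 \<le> R"
  shows "\<bar>clip R w\<bar> \<le> R" "\<bar>clip R w\<bar> \<le> \<bar>w\<bar>" "\<bar>w\<bar> \<le> R \<Longrightarrow> clip R w = w"
  using assms unfolding clip_def by (auto simp: abs_if max_def min_def split: if_splits)

lemma clip_increment:
  assumes "0 \<le> R"
  shows "0 \<le> (clip R a - clip R b) * (a - b)" "(clip R a - clip R b) * (a - b) \<le> (a - b)\<^sup>2"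
    "\<bar>clip R a - clip R b\<bar> \<le> \<bar>a - b\<bar>"
proof -
  have "0 \<le> (clip R y - clip R x) * (y - x) \<and> (clip R y - clip R x) * (y - x) \<le> (y - x)\<^sup>2
      \<and> \<bar>clip R y - clip R x\<bar> \<le> \<bar>y - x\<bar>" if "x \<le> y" for x y
  proof -
    have "0 \<le> clip R y - clip R x" "clip R y - clip R x \<le> y - x"
      using that assms unfolding clip_def by (auto simp: max_def min_def)
    then show ?thesis
      using that by (auto simp: power2_eq_square intro: mult_right_mono)
  qed
  from this[of a b] this[of b a] show "0 \<le> (clip R a - clip R b) * (a - b)"
    "(clip R a - clip R b) * (a - b) \<le> (a - b)\<^sup>2" "\<bar>clip R a - clip R b\<bar> \<le> \<bar>a - b\<bar>"
    by (cases "a \<le> b"; simp add: algebra_simps power2_commute abs_minus_commute)+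
qed

lemma mvt_real_between:
  fixes f f' :: "real \<Rightarrow> real"
  assumes "\<And>x. (f has_real_derivative f' x) (at x)"
  obtains \<xi> where "min a b \<le> \<xi>" "\<xi> \<le> max a b" "f a - f b = f' \<xi> * (a - b)"
proof (cases a b rule: linorder_cases)
  case less
  then obtain z where "a < z" "z < b" "f b - f a = (b - a) * f' z"
    using MVT2[OF less, of f f'] assms by blast
  with less that[of z] show ?thesis by (simp add: algebra_simps)
next
  case equal
  with that show ?thesis by auto
next
  case greater
  then obtain z where "b < z" "z < a" "f a - f b = (a - b) * f' z"
    using MVT2[OF greater, of f f'] assms by blast
  with greater that[of z] show ?thesis by (simp add: algebra_simps)
qed

lemma mvt_clip:
  fixes f f' :: "real \<Rightarrow> real"
  assumes "\<And>x. (f has_real_derivative f' x) (at x)" and R: "0 \<le> R"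
  obtains \<xi> where "\<bar>\<xi>\<bar> \<le> R" "f (clip R a) - f (clip R b) = f' \<xi> * (clip R a - clip R b)"
proof -
  obtain \<xi> where \<xi>: "min (clip R a) (clip R b) \<le> \<xi>" "\<xi> \<le> max (clip R a) (clip R b)"
    and "f (clip R a) - f (clip R b) = f' \<xi> * (clip R a - clip R b)"
    using mvt_real_between[OF assms(1)] .
  moreover have "\<bar>\<xi>\<bar> \<le> R"
    using \<xi> clip_bounds(1)[OF R, of a] clip_bounds(1)[OF R, of b] by (auto simp: abs_le_iff)
  ultimately show ?thesis
    using that by blast
qed

lemma clip_superposition_lipschitz:
  fixes f f' :: "real \<Rightarrow> real"
  assumes f': "\<And>x. (f has_real_derivative f' x) (at x)" and R: "0 \<le> R"
    and upper: "\<And>x. \<bar>x\<bar> \<le> R \<Longrightarrow> \<bar>f' x\<bar> \<le> K"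
  shows "\<bar>f (clip R a) - f (clip R b)\<bar> \<le> K * \<bar>a - b\<bar>"
proof -
  obtain \<xi> where "\<bar>\<xi>\<bar> \<le> R" and mvt: "f (clip R a) - f (clip R b) = f' \<xi> * (clip R a - clip R b)"
    using mvt_clip[OF f' R] .
  then have "\<bar>f' \<xi>\<bar> \<le> K"
    by (intro upper)
  then show ?thesis
    unfolding mvt abs_mult using clip_increment(3)[OF R] by (intro mult_mono) auto
qed

lemma clip_superposition_monotone:
  fixes f f' :: "real \<Rightarrow> real"
  assumes f': "\<And>x. (f has_real_derivative f' x) (at x)" and R: "0 \<le> R"
    and lower: "\<And>x. c \<le> f' x"
  shows "min c 0 * (a - b)\<^sup>2 \<le> (f (clip R a) - f (clip R b)) * (a - b)"
proof -
  obtain \<xi> where mvt: "f (clip R a) - f (clip R b) = f' \<xi> * (clip R a - clip R b)"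
    using mvt_clip[OF f' R] .
  define p where "p = (clip R a - clip R b) * (a - b)"
  have p: "0 \<le> p" "p \<le> (a - b)\<^sup>2"
    unfolding p_def using clip_increment[OF R] by auto
  have "min c 0 * (a - b)\<^sup>2 \<le> min c 0 * p"
    using p by (intro mult_left_mono_neg) auto
  also have "\<dots> \<le> f' \<xi> * p"
    using p lower[of \<xi>] by (intro mult_right_mono) auto
  finally show ?thesis
    unfolding mvt p_def by (simp add: algebra_simps)
qed

lemma mult_abs_le_square_add:
  fixes B x \<epsilon> :: real
  assumes "0 < \<epsilon>"
  shows "B * \<bar>x\<bar> \<le> \<epsilon> * x\<^sup>2 + B\<^sup>2 / (4 * \<epsilon>)"
proof -
  have "4 * \<epsilon> * (B * \<bar>x\<bar>) \<le> (2 * \<epsilon> * \<bar>x\<bar>)\<^sup>2 + B\<^sup>2"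
    using sum_squares_bound[of "2 * \<epsilon> * \<bar>x\<bar>" B] by (simp add: algebra_simps)
  then show ?thesis
    using assms by (simp add: field_simps power2_eq_square)
qed

lemma energy_bound_sublinear:
  assumes u: "C1_dirichlet u u'" and g: "continuous_on {0..1} g"
    and u'_deriv: "\<And>t. t \<in> {0..1} \<Longrightarrow> (u' has_real_derivative g t) (at t within {0..1})"
    and growth: "\<And>t. t \<in> {0..1} \<Longrightarrow> \<bar>g t\<bar> \<le> A * \<bar>u t\<bar> + B"
    and A: "0 \<le> A" "A < k" and k: "k < pi\<^sup>2"
  shows "integral {0..1} (\<lambda>t. (u' t)\<^sup>2) \<le> (sqrt k * B / (k - A))\<^sup>2"
proof -
  define \<epsilon> where "\<epsilon> = (k - A) / 2"
  define Eu where "Eu = integral {0..1} (\<lambda>t. (u' t)\<^sup>2)"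
  define Iu where "Iu = integral {0..1} (\<lambda>t. (u t)\<^sup>2)"
  have \<epsilon>: "0 < \<epsilon>" "k - (A + \<epsilon>) = \<epsilon>" and k0: "0 < k"
    using A by (auto simp: \<epsilon>_def field_simps)
  have cu: "continuous_on {0..1} u" "continuous_on {0..1} u'"
    using C1_dirichlet_continuous[OF u] by auto
  have "Eu = - integral {0..1} (\<lambda>t. g t * u t)"
    unfolding Eu_def power2_eq_square by (rule integration_by_parts_C1_dirichlet[OF u cu(2) g u'_deriv])
  also have "\<dots> \<le> integral {0..1} (\<lambda>t. (A + \<epsilon>) * (u t)\<^sup>2 + B\<^sup>2 / (4 * \<epsilon>))"
    unfolding integral_neg[symmetric]
  proof (intro integral_le integrable_continuous_real)
    fix t :: real assume t: "t \<in> {0..1}"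
    have "- (g t * u t) \<le> \<bar>g t\<bar> * \<bar>u t\<bar>"
      by (simp add: abs_mult[symmetric])
    also have "\<dots> \<le> (A * \<bar>u t\<bar> + B) * \<bar>u t\<bar>"
      using growth[OF t] by (simp add: mult_right_mono)
    also have "\<dots> \<le> A * (u t)\<^sup>2 + (\<epsilon> * (u t)\<^sup>2 + B\<^sup>2 / (4 * \<epsilon>))"
      using mult_abs_le_square_add[OF \<epsilon>(1), of B "u t"] by (simp add: algebra_simps power2_eq_square)
    finally show "- (g t * u t) \<le> (A + \<epsilon>) * (u t)\<^sup>2 + B\<^sup>2 / (4 * \<epsilon>)"
      by (simp add: algebra_simps)
  qed (use cu g in \<open>auto intro!: continuous_intros\<close>)
  also have "\<dots> = (A + \<epsilon>) * Iu + B\<^sup>2 / (4 * \<epsilon>)"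
    unfolding Iu_def using cu
    by (simp add: integral_add integrable_continuous_real continuous_intros)
  finally have "k * Eu \<le> (A + \<epsilon>) * (k * Iu) + k * (B\<^sup>2 / (4 * \<epsilon>))"
    using k0 mult_left_mono[of _ _ k] by (fastforce simp: algebra_simps)
  also have "\<dots> \<le> (A + \<epsilon>) * Eu + k * (B\<^sup>2 / (4 * \<epsilon>))"
    using wirtinger_inequality[OF u k0 k] A \<epsilon> unfolding Eu_def Iu_def
    by (intro add_mono mult_left_mono) auto
  finally have "\<epsilon> * Eu \<le> k * (B\<^sup>2 / (4 * \<epsilon>))"
    using \<epsilon>(2) by (simp add: algebra_simps)
  then have "Eu \<le> k * B\<^sup>2 / (4 * \<epsilon> * \<epsilon>)"
    using \<epsilon>(1) by (simp add: field_simps)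
  also have "4 * \<epsilon> * \<epsilon> = (k - A)\<^sup>2"
    by (simp add: \<epsilon>_def power2_eq_square)
  also have "k * B\<^sup>2 / (k - A)\<^sup>2 = (sqrt k * B / (k - A))\<^sup>2"
    using k0 by (simp add: power_divide power_mult_distrib)
  finally show ?thesis
    unfolding Eu_def .
qed

lemma lipschitz_clip_superposition:
  fixes F Fx :: "real \<Rightarrow> real \<Rightarrow> real"
  assumes Fx: "\<And>t x. t \<in> {0..1} \<Longrightarrow> ((\<lambda>y. F t y) has_real_derivative Fx t x) (at x)"
    and Fx_cont: "continuous_on ({0..1} \<times> UNIV) (\<lambda>(t, x). Fx t x)" and R: "0 \<le> R"
  shows "\<exists>L>0. \<forall>t\<in>{0..1}. \<forall>a b. \<bar>F t (clip R a) - F t (clip R b)\<bar> \<le> L * \<bar>a - b\<bar>"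
proof -
  obtain K where "\<And>p. p \<in> {0..1} \<times> {-R..R} \<Longrightarrow> norm ((\<lambda>(t, x). Fx t x) p) \<le> K"
    using continuous_on_compact_bound[of "{0..1} \<times> {-R..R}"] Fx_cont
    by (metis compact_Icc compact_Times continuous_on_subset subset_UNIV Sigma_mono order_refl)
  then have K: "\<bar>Fx t y\<bar> \<le> K" if "t \<in> {0..1}" "\<bar>y\<bar> \<le> R" for t y
    using that by (force simp: abs_le_iff)
  have "\<bar>F t (clip R a) - F t (clip R b)\<bar> \<le> (max K 0 + 1) * \<bar>a - b\<bar>" if "t \<in> {0..1}" for t a b
  proof -
    have "\<bar>F t (clip R a) - F t (clip R b)\<bar> \<le> K * \<bar>a - b\<bar>"
      using Fx[OF that] R K[OF that] by (rule clip_superposition_lipschitz)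
    also have "\<dots> \<le> (max K 0 + 1) * \<bar>a - b\<bar>"
      by (intro mult_right_mono) auto
    finally show ?thesis .
  qed
  then show ?thesis
    by (intro exI[of _ "max K 0 + 1"]) auto
qed

lemma C1_dirichlet_solution_exists:
  fixes F Fx :: "real \<Rightarrow> real \<Rightarrow> real"
  assumes F: "continuous_on ({0..1} \<times> UNIV) (\<lambda>(t, x). F t x)"
    and Fx: "\<And>t x. t \<in> {0..1} \<Longrightarrow> ((\<lambda>y. F t y) has_real_derivative Fx t x) (at x)"
    and Fx_cont: "continuous_on ({0..1} \<times> UNIV) (\<lambda>(t, x). Fx t x)"
    and growth: "\<And>t x. t \<in> {0..1} \<Longrightarrow> \<bar>F t x\<bar> \<le> A * \<bar>x\<bar> + B" and A: "0 \<le> A" "A < pi\<^sup>2"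
    and Fx_lower: "\<And>t x. t \<in> {0..1} \<Longrightarrow> c \<le> Fx t x" and c: "- (pi\<^sup>2) < c"
  shows "\<exists>u u'. C1_dirichlet u u' \<and>
    (\<forall>t\<in>{0..1}. (u' has_real_derivative F t (u t)) (at t within {0..1}))"
proof -
  define k where "k = (max (max A (- c)) 0 + pi\<^sup>2) / 2"
  have k: "A < k" "- c < k" "0 < k" "k < pi\<^sup>2"
    unfolding k_def using A c pi_gt_zero by (auto simp: max_def)
  \<comment> \<open>the a-priori bound of \<open>energy_bound_sublinear\<close>, so truncation at \<open>R\<close> is inactive\<close>
  define R where "R = sqrt k * B / (k - A)"
  have R: "0 \<le> R"
    unfolding R_def using k growth[of 0 0] by simp
  define G where "G t w = F t (clip R w)" for t w
  have "continuous_on ({0..1} \<times> UNIV) (\<lambda>p. (\<lambda>(t, x). F t x) (fst p, clip R (snd p)))"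
    by (rule continuous_on_compose2[OF F]) (auto simp: clip_def intro!: continuous_intros)
  then have G: "continuous_on ({0..1} \<times> UNIV) (\<lambda>(t, w). G t w)"
    by (simp add: G_def case_prod_unfold)
  obtain L where L: "0 < L" and lip: "\<And>t a b. t \<in> {0..1} \<Longrightarrow> \<bar>G t a - G t b\<bar> \<le> L * \<bar>a - b\<bar>"
    using lipschitz_clip_superposition[OF Fx Fx_cont R] unfolding G_def by blast
  have mono: "min c 0 * (a - b)\<^sup>2 \<le> (G t a - G t b) * (a - b)" if "t \<in> {0..1}" for t a b
    unfolding G_def using Fx[OF that] R Fx_lower[OF that] by (rule clip_superposition_monotone)
  have "- k < min c 0" "min c 0 \<le> 0"
    using k by auto
  from green_fixed_point_exists[OF G lip L mono this k(3,4)]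
  obtain u\<^sub>0 where cu\<^sub>0: "continuous_on {0..1} u\<^sub>0"
    and u\<^sub>0: "\<And>t. t \<in> {0..1} \<Longrightarrow> u\<^sub>0 t = green (\<lambda>s. G s (u\<^sub>0 s)) t"
    by blast
  define u where "u = green (\<lambda>s. G s (u\<^sub>0 s))"
  define u' where "u' = green_deriv (\<lambda>s. G s (u\<^sub>0 s))"
  have cGu\<^sub>0: "continuous_on {0..1} (\<lambda>s. G s (u\<^sub>0 s))"
    by (rule continuous_on_superposition[OF G cu\<^sub>0])
  have C1: "C1_dirichlet u u'"
    unfolding u_def u'_def by (rule C1_dirichlet_green[OF cGu\<^sub>0])
  have u'_deriv: "(u' has_real_derivative G t (u t)) (at t within {0..1})" if "t \<in> {0..1}" for t
    using green_deriv_has_real_derivative[OF cGu\<^sub>0 that] u\<^sub>0[OF that] by (simp add: u_def u'_def)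
  have "integral {0..1} (\<lambda>t. (u' t)\<^sup>2) \<le> R\<^sup>2"
    unfolding R_def
  proof (rule energy_bound_sublinear[OF C1 _ u'_deriv _ A(1) k(1,4)])
    show "continuous_on {0..1} (\<lambda>t. G t (u t))"
      by (rule continuous_on_superposition[OF G C1_dirichlet_continuous(1)[OF C1]])
    show "\<bar>G t (u t)\<bar> \<le> A * \<bar>u t\<bar> + B" if "t \<in> {0..1}" for t
      using growth[OF that, of "clip R (u t)"] clip_bounds(2)[OF R, of "u t"] A(1)
        mult_left_mono[of "\<bar>clip R (u t)\<bar>" "\<bar>u t\<bar>" A]
      unfolding G_def by linarith
  qed
  then have "\<bar>u t\<bar> \<le> R" if "t \<in> {0..1}" for t
    using C1_dirichlet_sq_le_energy[OF C1 that] power2_le_iff_abs_le[OF R, of "u t"] by linarith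
  then have "G t (u t) = F t (u t)" if "t \<in> {0..1}" for t
    using clip_bounds(3)[OF R] that by (simp add: G_def)
  then have "\<forall>t\<in>{0..1}. (u' has_real_derivative F t (u t)) (at t within {0..1})"
    using u'_deriv by simp
  with C1 show ?thesis
    by blast
qed

section \<open>Solutions in \<open>H\<^sup>2 \<inter> H\<^sup>1\<^sub>0\<close>\<close>

lemma lebesgue_on_initial_segment:
  fixes g :: "real \<Rightarrow> real"
  assumes g: "integrable (lebesgue_on {0..1}) g" and t: "t \<in> {0..1}"
  shows "integrable (lebesgue_on {0..t}) g"
    and "integral\<^sup>L (lebesgue_on {0..t}) g = integral {0..t} g"
    and "g integrable_on {0..t}"
proof -
  show i: "integrable (lebesgue_on {0..t}) g"
    using t by (intro integrable_subinterval[OF g]) auto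
  show "integral\<^sup>L (lebesgue_on {0..t}) g = integral {0..t} g"
    by (rule lebesgue_integral_eq_integral[OF i]) auto
  show "g integrable_on {0..t}"
    by (rule integrable_on_lebesgue_on[OF i]) auto
qed

lemma AE_lebesgue_on_initial_segment:
  assumes "AE s in lebesgue_on {0..1}. P s" "t \<le> (1::real)"
  shows "AE s in lebesgue_on {0..t}. P s"
proof -
  have "AE s in lebesgue. s \<in> {0..1} \<longrightarrow> P s"
    using assms(1) by (subst (asm) AE_restrict_space_iff) auto
  then have "AE s in lebesgue. s \<in> {0..t} \<longrightarrow> P s"
    by eventually_elim (use assms(2) in auto)
  then show ?thesis
    by (subst AE_restrict_space_iff) auto
qed

lemma L2_01_imp_integrable:
  assumes "L2_01 v"
  shows "integrable (lebesgue_on {0..1}) v"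
proof -
  have m: "v \<in> borel_measurable (lebesgue_on {0..1})"
    and i: "integrable (lebesgue_on {0..1}) (\<lambda>t. (v t)\<^sup>2)"
    using assms unfolding L2_01_def by blast+
  have "integrable (lebesgue_on {0..1}) (\<lambda>t. 1 + (v t)\<^sup>2)"
    by (rule Bochner_Integration.integrable_add[OF continuous_imp_integrable_real[OF continuous_on_const] i])
  moreover have "norm (v t) \<le> norm (1 + (v t)\<^sup>2)" for t
    using sum_squares_bound[of "\<bar>v t\<bar>" 1] by (simp add: power2_eq_square)
  ultimately show ?thesis
    by (rule Bochner_Integration.integrable_bound[OF _ m AE_I2])
qed

lemma has_real_derivative_indefinite_integral:
  assumes g: "continuous_on {0..1} g" and w: "\<And>t. t \<in> {0..1} \<Longrightarrow> w t = a + integral {0..t} g"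
    and t: "t \<in> {0..1}"
  shows "(w has_real_derivative g t) (at t within {0..1})"
proof -
  have "((\<lambda>t. a + integral {0..t} g) has_real_derivative g t) (at t within {0..1})"
    using integral_has_real_derivative[OF g t] by (auto intro!: derivative_eq_intros)
  then show ?thesis
    by (rule has_field_derivative_transform_within[where d = 1]) (use t w in auto)
qed

lemma H1_with_deriv_integral:
  assumes "H1_with_deriv x x'" and t: "t \<in> {0..1}"
  shows "x t = x 0 + integral {0..t} x'"
proof -
  have "x t = x 0 + integral\<^sup>L (lebesgue_on {0..t}) x'"
    using assms unfolding H1_with_deriv_def by blast
  moreover have "integrable (lebesgue_on {0..1}) x'"
    using assms unfolding H1_with_deriv_def by blast
  ultimately show ?thesis
    by (simp add: lebesgue_on_initial_segment(2)[OF _ t])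
qed

lemma H1_with_deriv_continuous_on:
  assumes x: "H1_with_deriv x x'"
  shows "continuous_on {0..1} x"
proof -
  have "x' integrable_on {0..1}"
    using x lebesgue_on_initial_segment(3)[of x' 1] unfolding H1_with_deriv_def by auto
  then have "continuous_on {0..1} (\<lambda>t. x 0 + integral {0..t} x')"
    by (intro continuous_intros indefinite_integral_continuous_1)
  then show ?thesis
    by (rule continuous_on_eq) (metis H1_with_deriv_integral[OF x])
qed

lemma H1_with_deriv_of_C1:
  assumes w': "continuous_on {0..1} w'"
    and w: "\<And>t. t \<in> {0..1} \<Longrightarrow> (w has_real_derivative w' t) (at t within {0..1})"
  shows "H1_with_deriv w w'"
  unfolding H1_with_deriv_def L2_01_def
proof (intro conjI ballI)
  show "w' \<in> borel_measurable (lebesgue_on {0..1})"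
    using w' by (rule continuous_imp_measurable_on_sets_lebesgue) simp
  show "integrable (lebesgue_on {0..1}) (\<lambda>t. (w' t)\<^sup>2)"
    using w' by (intro continuous_imp_integrable_real continuous_intros)
  show i: "integrable (lebesgue_on {0..1}) w'"
    by (rule continuous_imp_integrable_real[OF w'])
  fix t :: real assume t: "t \<in> {0..1}"
  have "(w' has_integral w t - w 0) {0..t}"
    using w t by (intro has_integral_real_derivative_initial[of 0 1]) auto
  then show "w t = w 0 + integral\<^sup>L (lebesgue_on {0..t}) w'"
    using lebesgue_on_initial_segment(2)[OF i t] by (simp add: integral_unique)
qed

lemma H1_with_deriv_continuous_plus_L2:
  assumes a: "continuous_on {0..1} a" and v: "L2_01 v"
    and w: "\<And>t. t \<in> {0..1} \<Longrightarrow> w t = w 0 + integral {0..t} a + integral {0..t} v"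
  shows "H1_with_deriv w (\<lambda>t. a t + v t)"
  unfolding H1_with_deriv_def L2_01_def
proof (intro conjI ballI)
  have ia: "integrable (lebesgue_on {0..1}) a"
    by (rule continuous_imp_integrable_real[OF a])
  have iv: "integrable (lebesgue_on {0..1}) v"
    by (rule L2_01_imp_integrable[OF v])
  have ma: "a \<in> borel_measurable (lebesgue_on {0..1})"
    using a by (rule continuous_imp_measurable_on_sets_lebesgue) simp
  have mv: "v \<in> borel_measurable (lebesgue_on {0..1})"
    using v unfolding L2_01_def by blast
  show "(\<lambda>t. a t + v t) \<in> borel_measurable (lebesgue_on {0..1})"
    using ma mv by (rule borel_measurable_add)
  show "integrable (lebesgue_on {0..1}) (\<lambda>t. (a t + v t)\<^sup>2)"
  proof (rule Bochner_Integration.integrable_bound)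
    have "integrable (lebesgue_on {0..1}) (\<lambda>t. (a t)\<^sup>2)"
      using a by (intro continuous_imp_integrable_real continuous_intros)
    then show "integrable (lebesgue_on {0..1}) (\<lambda>t. 2 * (a t)\<^sup>2 + 2 * (v t)\<^sup>2)"
      using v unfolding L2_01_def by (intro Bochner_Integration.integrable_add integrable_mult_right) auto
    show "(\<lambda>t. (a t + v t)\<^sup>2) \<in> borel_measurable (lebesgue_on {0..1})"
      using ma mv by (intro borel_measurable_power borel_measurable_add)
    have "(a t + v t)\<^sup>2 \<le> 2 * (a t)\<^sup>2 + 2 * (v t)\<^sup>2" for t
      using sum_squares_bound[of "a t" "v t"] by (simp add: power2_eq_square algebra_simps)
    then show "AE t in lebesgue_on {0..1}. norm ((a t + v t)\<^sup>2) \<le> norm (2 * (a t)\<^sup>2 + 2 * (v t)\<^sup>2)"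
      by (intro AE_I2) simp
  qed
  show "integrable (lebesgue_on {0..1}) (\<lambda>t. a t + v t)"
    by (rule Bochner_Integration.integrable_add[OF ia iv])
  fix t :: real assume t: "t \<in> {0..1}"
  have "integral\<^sup>L (lebesgue_on {0..t}) (\<lambda>t. a t + v t) = integral {0..t} a + integral {0..t} v"
    using lebesgue_on_initial_segment[OF ia t] lebesgue_on_initial_segment[OF iv t] by simp
  then show "w t = w 0 + integral\<^sup>L (lebesgue_on {0..t}) (\<lambda>t. a t + v t)"
    using w[OF t] by simp
qed

lemma dirichlet_solution_imp_C1:
  assumes sol: "dirichlet_solution f v x" and v: "L2_01 v"
    and f: "continuous_on ({0..1} \<times> UNIV) (\<lambda>(t, x). f t x)"
  shows "\<exists>x'. C1_dirichlet x x' \<and>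
    (\<forall>t\<in>{0..1}. x' t = x' 0 + integral {0..t} (\<lambda>s. f s (x s)) + integral {0..t} v)"
proof -
  obtain x' x'' where h1: "H1_with_deriv x x'" and h2: "H1_with_deriv x' x''"
    and bc: "x 0 = 0" "x 1 = 0" and ae: "AE t in lebesgue_on {0..1}. x'' t = f t (x t) + v t"
    using sol unfolding dirichlet_solution_def by blast
  have cx': "continuous_on {0..1} x'"
    by (rule H1_with_deriv_continuous_on[OF h2])
  have dx: "(x has_real_derivative x' t) (at t within {0..1})" if "t \<in> {0..1}" for t
    using cx' H1_with_deriv_integral[OF h1] that by (rule has_real_derivative_indefinite_integral)
  have cfx: "continuous_on {0..1} (\<lambda>s. f s (x s))"
    by (rule continuous_on_superposition[OF f H1_with_deriv_continuous_on[OF h1]])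
  have i2: "integrable (lebesgue_on {0..1}) x''"
    using h2 unfolding H1_with_deriv_def by blast
  have iv: "integrable (lebesgue_on {0..1}) v"
    by (rule L2_01_imp_integrable[OF v])
  have "x' t = x' 0 + integral {0..t} (\<lambda>s. f s (x s)) + integral {0..t} v" if t: "t \<in> {0..1}" for t
  proof -
    have ift: "integrable (lebesgue_on {0..t}) (\<lambda>s. f s (x s))"
      using t by (intro continuous_imp_integrable_real continuous_on_subset[OF cfx]) auto
    have "integral\<^sup>L (lebesgue_on {0..t}) x'' = integral\<^sup>L (lebesgue_on {0..t}) (\<lambda>s. f s (x s) + v s)"
    proof (rule integral_cong_AE)
      show "x'' \<in> borel_measurable (lebesgue_on {0..t})"
        by (rule borel_measurable_integrable[OF lebesgue_on_initial_segment(1)[OF i2 t]])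
      show "(\<lambda>s. f s (x s) + v s) \<in> borel_measurable (lebesgue_on {0..t})"
        using ift lebesgue_on_initial_segment(1)[OF iv t] by (intro borel_measurable_add) auto
      show "AE s in lebesgue_on {0..t}. x'' s = f s (x s) + v s"
        using t by (intro AE_lebesgue_on_initial_segment[OF ae]) auto
    qed
    also have "\<dots> = integral {0..t} (\<lambda>s. f s (x s)) + integral {0..t} v"
      using ift lebesgue_on_initial_segment(1,2)[OF iv t]
      by (simp add: lebesgue_integral_eq_integral)
    finally show ?thesis
      using H1_with_deriv_integral[OF h2 t] lebesgue_on_initial_segment(2)[OF i2 t] by simp
  qed
  moreover have "C1_dirichlet x x'"
    unfolding C1_dirichlet_def using cx' dx bc by blast
  ultimately show ?thesis by blast
qed

lemma dirichlet_solutionI: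
  assumes x: "C1_dirichlet x x'" and v: "L2_01 v"
    and f: "continuous_on ({0..1} \<times> UNIV) (\<lambda>(t, x). f t x)"
    and x': "\<And>t. t \<in> {0..1} \<Longrightarrow> x' t = x' 0 + integral {0..t} (\<lambda>s. f s (x s)) + integral {0..t} v"
  shows "dirichlet_solution f v x"
proof -
  have "H1_with_deriv x x'"
    using x unfolding C1_dirichlet_def by (intro H1_with_deriv_of_C1) auto
  moreover have "H1_with_deriv x' (\<lambda>t. f t (x t) + v t)"
    using continuous_on_superposition[OF f C1_dirichlet_continuous(1)[OF x]] v x'
    by (rule H1_with_deriv_continuous_plus_L2)
  ultimately show ?thesis
    using x unfolding dirichlet_solution_def C1_dirichlet_def by auto
qed

lemma C1_dirichlet_eq_0_if_monotone:
  assumes w: "C1_dirichlet w w'" and g: "continuous_on {0..1} g"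
    and w'_deriv: "\<And>t. t \<in> {0..1} \<Longrightarrow> (w' has_real_derivative g t) (at t within {0..1})"
    and mono: "\<And>t. t \<in> {0..1} \<Longrightarrow> c * (w t)\<^sup>2 \<le> g t * w t" and c: "- (pi\<^sup>2) < c"
    and t: "t \<in> {0..1}"
  shows "w t = 0"
proof -
  define m where "m = max (- c) 0"
  define k where "k = (m + pi\<^sup>2) / 2"
  have k: "m < k" "0 < k" "k < pi\<^sup>2"
    unfolding k_def m_def using c pi_gt_zero by (auto simp: max_def)
  define Ew where "Ew = integral {0..1} (\<lambda>t. (w' t)\<^sup>2)"
  define Iw where "Iw = integral {0..1} (\<lambda>t. (w t)\<^sup>2)"
  have cw: "continuous_on {0..1} w" "continuous_on {0..1} w'"
    using C1_dirichlet_continuous[OF w] by auto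
  have Iw: "0 \<le> Iw"
    unfolding Iw_def using cw by (intro integral_nonneg integrable_continuous_real continuous_intros) auto
  have "Ew = - integral {0..1} (\<lambda>t. g t * w t)"
    unfolding Ew_def power2_eq_square by (rule integration_by_parts_C1_dirichlet[OF w cw(2) g w'_deriv])
  also have "\<dots> \<le> - (c * Iw)"
    unfolding Iw_def neg_le_iff_le integral_mult_right[symmetric] using cw g mono
    by (intro integral_le integrable_continuous_real continuous_intros) auto
  also have "\<dots> \<le> m * Iw"
    unfolding m_def using Iw by (simp add: max_def mult_right_mono)
  finally have "Ew \<le> m * Iw" .
  moreover have "k * Iw \<le> Ew"
    unfolding Iw_def Ew_def by (rule wirtinger_inequality[OF w k(2,3)])
  ultimately have "(k - m) * Iw \<le> 0"
    by (simp add: algebra_simps)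
  then have "Iw = 0"
    using Iw k(1) by (simp add: mult_le_0_iff)
  with \<open>Ew \<le> m * Iw\<close> have "Ew \<le> 0"
    by simp
  then have "(w t)\<^sup>2 \<le> 0"
    using C1_dirichlet_sq_le_energy[OF w t] unfolding Ew_def by linarith
  then show ?thesis
    by simp
qed

lemma dirichlet_solution_unique:
  assumes v: "L2_01 v" and f: "continuous_on ({0..1} \<times> UNIV) (\<lambda>(t, x). f t x)"
    and fx: "\<And>t x. t \<in> {0..1} \<Longrightarrow> ((\<lambda>y. f t y) has_real_derivative fx t x) (at x)"
    and fx_lower: "\<And>t x. t \<in> {0..1} \<Longrightarrow> c \<le> fx t x" and c: "- (pi\<^sup>2) < c"
    and x: "dirichlet_solution f v x" and y: "dirichlet_solution f v y" and t: "t \<in> {0..1}"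
  shows "y t = x t"
proof -
  obtain x' where x': "C1_dirichlet x x'"
    and x'_eq: "\<And>t. t \<in> {0..1} \<Longrightarrow> x' t = x' 0 + integral {0..t} (\<lambda>s. f s (x s)) + integral {0..t} v"
    using dirichlet_solution_imp_C1[OF x v f] by blast
  obtain y' where y': "C1_dirichlet y y'"
    and y'_eq: "\<And>t. t \<in> {0..1} \<Longrightarrow> y' t = y' 0 + integral {0..t} (\<lambda>s. f s (y s)) + integral {0..t} v"
    using dirichlet_solution_imp_C1[OF y v f] by blast
  define g where "g s = f s (y s) - f s (x s)" for s
  have cfx: "continuous_on {0..1} (\<lambda>s. f s (x s))" and cfy: "continuous_on {0..1} (\<lambda>s. f s (y s))"
    using continuous_on_superposition[OF f] C1_dirichlet_continuous(1) x' y' by blast+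
  have cg: "continuous_on {0..1} g"
    unfolding g_def using cfx cfy by (intro continuous_intros)
  have "y' s - x' s = (y' 0 - x' 0) + integral {0..s} g" if s: "s \<in> {0..1}" for s
  proof -
    have "integral {0..s} g = integral {0..s} (\<lambda>s. f s (y s)) - integral {0..s} (\<lambda>s. f s (x s))"
      unfolding g_def using s
      by (intro integral_diff integrable_continuous_real continuous_on_subset[OF cfx]
          continuous_on_subset[OF cfy]) auto
    then show ?thesis
      using x'_eq[OF s] y'_eq[OF s] by simp
  qed
  then have "((\<lambda>s. y' s - x' s) has_real_derivative g s) (at s within {0..1})" if "s \<in> {0..1}" for s
    by (rule has_real_derivative_indefinite_integral[OF cg _ that])
  moreover have "c * (y s - x s)\<^sup>2 \<le> g s * (y s - x s)" if s: "s \<in> {0..1}" for s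
  proof -
    obtain \<xi> where "f s (y s) - f s (x s) = fx s \<xi> * (y s - x s)"
      using mvt_real_between[OF fx[OF s]] by metis
    then have "g s * (y s - x s) = fx s \<xi> * (y s - x s)\<^sup>2"
      by (simp add: g_def power2_eq_square)
    then show ?thesis
      using fx_lower[OF s, of \<xi>] by (simp add: mult_right_mono)
  qed
  ultimately have "y t - x t = 0"
    using C1_dirichlet_eq_0_if_monotone[OF C1_dirichlet_diff[OF y' x'] cg _ _ c t] by blast
  then show ?thesis by simp
qed

lemma C1_dirichlet_with_integral_derivative:
  assumes v: "L2_01 v"
  shows "\<exists>z z'. C1_dirichlet z z' \<and> (\<forall>t\<in>{0..1}. z' t = z' 0 + integral {0..t} v)"
proof -
  have "v integrable_on {0..1}"
    using lebesgue_on_initial_segment(3)[OF L2_01_imp_integrable[OF v], of 1] by simp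
  then have cv: "continuous_on {0..1} (primitive v)"
    unfolding primitive_def[abs_def] by (rule indefinite_integral_continuous_1)
  define z' where "z' t = primitive v t - integral {0..1} (primitive v)" for t
  define z where "z = primitive z'"
  have cz': "continuous_on {0..1} z'"
    unfolding z'_def[abs_def] using cv by (intro continuous_intros)
  have "((\<lambda>t. primitive v t - integral {0..1} (primitive v)) has_integral
      integral {0..1} (primitive v) - integral {0..1} (primitive v)) {0..1}"
    using cv has_integral_const_real[of "integral {0..1} (primitive v)" 0 1]
    by (intro has_integral_diff integrable_integral integrable_continuous_real) auto
  then have "z 1 = 0"
    by (simp add: z_def primitive_def z'_def[abs_def] integral_unique)
  then have "C1_dirichlet z z'"
    unfolding C1_dirichlet_def z_def
    using cz' primitive_has_real_derivative[OF cz'] by (simp add: primitive_def)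
  moreover have "z' t = z' 0 + integral {0..t} v" for t
    by (simp add: z'_def primitive_def)
  ultimately show ?thesis by blast
qed

lemma dirichlet_solution_exists:
  assumes v: "L2_01 v" and f: "continuous_on ({0..1} \<times> UNIV) (\<lambda>(t, x). f t x)"
    and fx: "\<And>t x. t \<in> {0..1} \<Longrightarrow> ((\<lambda>y. f t y) has_real_derivative fx t x) (at x)"
    and fx_cont: "continuous_on ({0..1} \<times> UNIV) (\<lambda>(t, x). fx t x)"
    and growth: "\<And>t x. t \<in> {0..1} \<Longrightarrow> \<bar>f t x\<bar> \<le> A * \<bar>x\<bar> + B" and A: "0 \<le> A" "A < pi\<^sup>2"
    and fx_lower: "\<And>t x. t \<in> {0..1} \<Longrightarrow> c \<le> fx t x" and c: "- (pi\<^sup>2) < c"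
  shows "\<exists>x. dirichlet_solution f v x"
proof -
  obtain z z' where z: "C1_dirichlet z z'" and z'_eq: "\<And>t. t \<in> {0..1} \<Longrightarrow> z' t = z' 0 + integral {0..t} v"
    using C1_dirichlet_with_integral_derivative[OF v] by blast
  obtain Z where Z: "\<And>t. t \<in> {0..1} \<Longrightarrow> \<bar>z t\<bar> \<le> Z"
    using continuous_on_compact_bound[OF compact_Icc C1_dirichlet_continuous(1)[OF z]] by auto
  have zc: "continuous_on ({0..1} \<times> UNIV) (\<lambda>p :: real \<times> real. z (fst p))"
    by (rule continuous_on_compose2[OF C1_dirichlet_continuous(1)[OF z]]) (auto intro: continuous_intros)
  \<comment> \<open>The substitution \<open>x = u + z\<close> removes the \<open>L\<^sup>2\<close> forcing.\<close>
  define F where "F t w = f t (w + z t)" for t w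
  have "continuous_on ({0..1} \<times> UNIV) (\<lambda>p. (\<lambda>(t, x). f t x) (fst p, snd p + z (fst p)))"
    by (rule continuous_on_compose2[OF f]) (auto intro!: continuous_intros zc)
  then have F: "continuous_on ({0..1} \<times> UNIV) (\<lambda>(t, w). F t w)"
    by (simp add: F_def case_prod_unfold)
  have "continuous_on ({0..1} \<times> UNIV) (\<lambda>p. (\<lambda>(t, x). fx t x) (fst p, snd p + z (fst p)))"
    by (rule continuous_on_compose2[OF fx_cont]) (auto intro!: continuous_intros zc)
  then have Fx_cont: "continuous_on ({0..1} \<times> UNIV) (\<lambda>(t, w). fx t (w + z t))"
    by (simp add: case_prod_unfold)
  have Fx: "((\<lambda>y. F t y) has_real_derivative fx t (w + z t)) (at w)" if "t \<in> {0..1}" for t w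
    using DERIV_chain2[OF fx[OF that] DERIV_add[OF DERIV_ident DERIV_const]]
    by (simp add: F_def)
  have "\<bar>F t w\<bar> \<le> A * \<bar>w\<bar> + (A * Z + B)" if t: "t \<in> {0..1}" for t w
  proof -
    have "\<bar>F t w\<bar> \<le> A * \<bar>w + z t\<bar> + B"
      unfolding F_def by (rule growth[OF t])
    also have "\<dots> \<le> A * (\<bar>w\<bar> + Z) + B"
      using A Z[OF t] abs_triangle_ineq[of w "z t"] by (intro add_mono mult_left_mono) auto
    finally show ?thesis by (simp add: algebra_simps)
  qed
  from C1_dirichlet_solution_exists[OF F Fx Fx_cont this A fx_lower c]
  obtain u u' where u: "C1_dirichlet u u'"
    and u'_deriv: "\<And>t. t \<in> {0..1} \<Longrightarrow> (u' has_real_derivative F t (u t)) (at t within {0..1})"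
    by blast
  define x where "x t = u t + z t" for t
  define x' where "x' t = u' t + z' t" for t
  have x: "C1_dirichlet x x'"
    unfolding x_def[abs_def] x'_def[abs_def] by (rule C1_dirichlet_add[OF u z])
  have "x' t = x' 0 + integral {0..t} (\<lambda>s. f s (x s)) + integral {0..t} v" if t: "t \<in> {0..1}" for t
  proof -
    have "((\<lambda>s. f s (x s)) has_integral u' t - u' 0) {0..t}"
      using u'_deriv t by (intro has_integral_real_derivative_initial[of 0 1]) (auto simp: F_def x_def)
    then show ?thesis
      using z'_eq[OF t] by (simp add: x'_def integral_unique)
  qed
  then show ?thesis
    using dirichlet_solutionI[OF x v f] by blast
qed

theorem theorem3:
  fixes f fx :: "real \<Rightarrow> real \<Rightarrow> real" and v :: "real \<Rightarrow> real"
  assumes v_L2: "L2_01 v"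
    and f_cont: "continuous_on ({0..1} \<times> UNIV) (\<lambda>(t, x). f t x)"
    and fx_deriv: "\<And>t x. t \<in> {0..1} \<Longrightarrow> ((\<lambda>y. f t y) has_real_derivative fx t x) (at x)"
    and fx_cont: "continuous_on ({0..1} \<times> UNIV) (\<lambda>(t, x). fx t x)"
    and growth: "\<exists>A B. 0 < A \<and> 0 < B \<and> A < pi\<^sup>2 \<and>
                   (\<forall>t\<in>{0..1}. \<forall>x. \<bar>f t x\<bar> \<le> A * \<bar>x\<bar> + B)"
    and fx_inf: "\<exists>c. c > - (pi\<^sup>2) \<and> (\<forall>t\<in>{0..1}. \<forall>x. c \<le> fx t x)"
  shows "\<exists>x. dirichlet_solution f v x \<and>
           (\<forall>y. dirichlet_solution f v y \<longrightarrow> (\<forall>t\<in>{0..1}. y t = x t))"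
proof -
  obtain A B where A: "0 < A" "A < pi\<^sup>2" and f_growth: "\<And>t x. t \<in> {0..1} \<Longrightarrow> \<bar>f t x\<bar> \<le> A * \<bar>x\<bar> + B"
    using growth by blast
  obtain c where c: "- (pi\<^sup>2) < c" and fx_lower: "\<And>t x. t \<in> {0..1} \<Longrightarrow> c \<le> fx t x"
    using fx_inf by blast
  obtain x where x: "dirichlet_solution f v x"
    using dirichlet_solution_exists[OF v_L2 f_cont fx_deriv fx_cont f_growth _ A(2) fx_lower c] A(1)
    by auto
  moreover have "\<forall>y. dirichlet_solution f v y \<longrightarrow> (\<forall>t\<in>{0..1}. y t = x t)"
    using dirichlet_solution_unique[OF v_L2 f_cont fx_deriv fx_lower c x] by blast
  ultimately show ?thesis by blast
qed

end
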